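(* Let $\varepsilon>0$ and $\boldsymbol\alpha(\mathbf{x},\mathbf{y})=\frac{\mathbf{y}-\mathbf{x}}{|\mathbf{y}-\mathbf{x}|^2}\chi_{B_\varepsilon(\mathbf{x})}(\mathbf{y})$ for $\mathbf{x},\mathbf{y}\in\mathbb{R}^3$. For $\mathbf{u}:\mathbb{R}^3\to\mathbb{R}^3$ let $(\mathcal{G}^*_{\boldsymbol\alpha}\mathbf{u})(\mathbf{x},\mathbf{y})=-\big(\mathbf{u}(\mathbf{y})-\mathbf{u}(\mathbf{x})\big)\cdot\boldsymbol\alpha(\mathbf{x},\mathbf{y})$ and $(\mathcal{D}^*_{\boldsymbol\alpha}\mathbf{u})(\mathbf{x},\mathbf{y})=-\big(\mathbf{u}(\mathbf{y})-\mathbf{u}(\mathbf{x})\big)\otimes\boldsymbol\alpha(\mathbf{x},\mathbf{y})$; for a scalar two-point function $\eta$ let $(\mathcal{G}_{\boldsymbol\alpha}\eta)(\mathbf{x})=\int_{\mathbb{R}^3}\big(\eta(\mathbf{y},\mathbf{x})+\eta(\mathbf{x},\mathbf{y})\big)\boldsymbol\alpha(\mathbf{x},\mathbf{y})\,d\mathbf{y}$, and for a tensor-valued two-point function $\boldsymbol\Psi$ let $(\mathcal{D}_{\boldsymbol\alpha}\boldsymbol\Psi)(\mathbf{x})=\int_{\mathbb{R}^3}\big(\boldsymbol\Psi(\mathbf{y},\mathbf{x})+\boldsymbol\Psi(\mathbf{x},\mathbf{y})\big)\boldsymbol\alpha(\mathbf{x},\mathbf{y})\,d\mathbf{y}$.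 Then for every scalar function $c$ on $\mathbb{R}^3$ and every $\mathbf{u}$ (with the integrals convergent), $\mathcal{D}_{\boldsymbol\alpha}\big(c(\mathcal{D}^*_{\boldsymbol\alpha}\mathbf{u})^T\big)=\mathcal{G}_{\boldsymbol\alpha}(c\,\mathcal{G}^*_{\boldsymbol\alpha}\mathbf{u})$, where $(c(\mathcal{D}^*_{\boldsymbol\alpha}\mathbf{u})^T)(\mathbf{x},\mathbf{y})=c(\mathbf{x})(\mathcal{D}^*_{\boldsymbol\alpha}\mathbf{u})(\mathbf{x},\mathbf{y})^T$ and $(c\,\mathcal{G}^*_{\boldsymbol\alpha}\mathbf{u})(\mathbf{x},\mathbf{y})=c(\mathbf{x})(\mathcal{G}^*_{\boldsymbol\alpha}\mathbf{u})(\mathbf{x},\mathbf{y})$.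
   Context: $B_\varepsilon(\mathbf{x})$ is the open ball of radius $\varepsilon$ about $\mathbf{x}$, $\chi_A$ the indicator of $A$, and $(\mathbf{a}\otimes\mathbf{b})_{ij}=a_ib_j$. *)

theory Defs
  imports "HOL-Analysis.Analysis"
begin

definition kernel_alpha :: "real \<Rightarrow> real^3 \<Rightarrow> real^3 \<Rightarrow> real^3" where
  "kernel_alpha eps x y =
     (if y \<in> ball x eps then (1 / (norm (y - x))\<^sup>2) *\<^sub>R (y - x) else 0)"

definition outer :: "real^3 \<Rightarrow> real^3 \<Rightarrow> real^3^3" where
  "outer a b = (\<chi> i j. a $ i * b $ j)"

definition Gstar :: "real \<Rightarrow> (real^3 \<Rightarrow> real^3) \<Rightarrow> real^3 \<Rightarrow> real^3 \<Rightarrow> real" where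
  "Gstar eps u x y = - ((u y - u x) \<bullet> kernel_alpha eps x y)"

definition Dstar :: "real \<Rightarrow> (real^3 \<Rightarrow> real^3) \<Rightarrow> real^3 \<Rightarrow> real^3 \<Rightarrow> real^3^3" where
  "Dstar eps u x y = - outer (u y - u x) (kernel_alpha eps x y)"

definition Gop :: "real \<Rightarrow> (real^3 \<Rightarrow> real^3 \<Rightarrow> real) \<Rightarrow> real^3 \<Rightarrow> real^3" where
  "Gop eps \<eta> x = integral UNIV (\<lambda>y. (\<eta> y x + \<eta> x y) *\<^sub>R kernel_alpha eps x y)"

definition Dop :: "real \<Rightarrow> (real^3 \<Rightarrow> real^3 \<Rightarrow> real^3^3) \<Rightarrow> real^3 \<Rightarrow> real^3" where
  "Dop eps \<Psi> x = integral UNIV (\<lambda>y. (\<Psi> y x + \<Psi> x y) *v kernel_alpha eps x y)"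

end

theory Submission
  imports Defs
begin

text \<open>The two integrands already agree pointwise. Since
  \<open>(a \<otimes> b)\<^sup>T v = (a \<cdot> v) b\<close>, applying \<open>(\<D>\<^sup>*u)(x,y)\<^sup>T\<close> to \<open>\<alpha>(x,y)\<close> gives
  \<open>(\<G>\<^sup>*u)(x,y) \<alpha>(x,y)\<close>; for the swapped term \<open>(\<D>\<^sup>*u)(y,x)\<^sup>T \<alpha>(x,y)\<close> the same
  holds because \<open>\<alpha>\<close> is antisymmetric, \<open>\<alpha>(y,x) = -\<alpha>(x,y)\<close>, and the two sign
  changes cancel.\<close>

lemma kernel_alpha_swap: "kernel_alpha eps y x = - kernel_alpha eps x y"
  unfolding kernel_alpha_def
  by (simp add: dist_commute norm_minus_commute) (metis minus_diff_eq scaleR_minus_right)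

lemma uminus_outer: "- outer a b = outer (- a) b"
  by (simp add: outer_def vec_eq_iff)

lemma transpose_outer_mult_vec: "transpose (outer a b) *v v = (a \<bullet> v) *\<^sub>R b"
  by (simp add: outer_def vec_eq_iff vector_matrix_mult_def inner_vec_def
      sum_distrib_left ac_simps)

lemma transpose_Dstar_mult_kernel:
  "transpose (Dstar eps u x y) *v kernel_alpha eps x y = Gstar eps u x y *\<^sub>R kernel_alpha eps x y"
  by (simp add: Dstar_def Gstar_def uminus_outer transpose_outer_mult_vec algebra_simps
      del: transpose_matrix_vector)

lemma transpose_Dstar_mult_kernel_swap:
  "transpose (Dstar eps u y x) *v kernel_alpha eps x y = Gstar eps u y x *\<^sub>R kernel_alpha eps x y"
  by (simp add: Dstar_def Gstar_def kernel_alpha_swap[of eps x y] uminus_outer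
      transpose_outer_mult_vec algebra_simps del: transpose_matrix_vector)

theorem proposition4p3:
  fixes eps :: real and c :: "real^3 \<Rightarrow> real" and u :: "real^3 \<Rightarrow> real^3"
  assumes "eps > 0"
    and "\<And>x. (\<lambda>y. ((\<lambda>x y. c x *\<^sub>R transpose (Dstar eps u x y)) y x
                    + (\<lambda>x y. c x *\<^sub>R transpose (Dstar eps u x y)) x y) *v kernel_alpha eps x y)
              integrable_on UNIV"
    and "\<And>x. (\<lambda>y. ((\<lambda>x y. c x * Gstar eps u x y) y x
                    + (\<lambda>x y. c x * Gstar eps u x y) x y) *\<^sub>R kernel_alpha eps x y)
              integrable_on UNIV"
  shows "Dop eps (\<lambda>x y. c x *\<^sub>R transpose (Dstar eps u x y))
         = Gop eps (\<lambda>x y. c x * Gstar eps u x y)"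
proof
  fix x
  have "(c y *\<^sub>R transpose (Dstar eps u y x) + c x *\<^sub>R transpose (Dstar eps u x y))
          *v kernel_alpha eps x y
        = (c y * Gstar eps u y x + c x * Gstar eps u x y) *\<^sub>R kernel_alpha eps x y" for y
    by (simp add: matrix_vector_mult_add_rdistrib scaleR_add_left
        scaleR_matrix_vector_assoc[symmetric] transpose_Dstar_mult_kernel
        transpose_Dstar_mult_kernel_swap del: transpose_matrix_vector)
  then show "Dop eps (\<lambda>x y. c x *\<^sub>R transpose (Dstar eps u x y)) x
             = Gop eps (\<lambda>x y. c x * Gstar eps u x y) x"
    by (simp add: Dop_def Gop_def)
qed

end
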